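(* In the setting described in the context, equality $H(\theta)=C_\Upsilon(\theta)$ holds if and only if $\langle w_j'(\theta)|w_k(\theta)\rangle=0$ for all $j,k$ (including $j=k$) with $p_j(\theta)>0$ and $p_k(\theta)>0$.
   Context: A one-parameter quantum channel is a map $\rho_0\mapsto\sum_k E_k(\theta)\rho_0E_k(\theta)^\dagger$ on density matrices on $\mathbb{C}^d$, with Kraus operators $E_k(\theta)$ depending differentiably on a real parameter $\theta$ and $\sum_k E_k^\dagger E_k=I$. The input state is a fixed pure state $\rho_0=|\psi_0\rangle\langle\psi_0|$. The canonical Kraus operators $\{\Upsilon_k(\theta)\}_{k=1}^d$ form a differentiable Kraus representation of the same channel with $\mathrm{tr}\{\Upsilon_k\rho_0\Upsilon_j^\dagger\}=\delta_{jk}p_k(\theta)$. The output state is $\rho_{out}(\theta)=\sum_k p_k(\theta)|w_k(\theta)\rangle\langle w_k(\theta)|$, with $\{|w_k(\theta)\rangle\}$ an orthonormal basis depending differentiably on $\theta$ and $|w_k\rangle=p_k^{-1/2}\Upsilon_k|\psi_0\rangle$ when $p_k>0$. A prime denotes $d/d\theta$. $C_\Upsilon(\theta)=4\sum_k\mathrm{tr}\{\Upsilon_k'\rho_0\Upsilon_k'^\dagger\}$ (the Sarovar–Milburn bound), and $H(\theta)=\mathrm{tr}\{\rho_{out}\lambda^2\}$ is the SLD quantum information, $\lambda$ being a self-adjoint solution of $\rho_{out}'=\frac12(\rho_{out}\lambda+\lambda\rho_{out})$. *)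

theory Defs
  imports "HOL-Analysis.Analysis"
begin

text \<open>Complex d-dimensional Hilbert space: vectors complex^'n, operators complex^'n^'n,
  where the finite index type 'n has CARD('n) = d.\<close>

definition adj :: "complex^'n^'n \<Rightarrow> complex^'n^'n" where
  "adj A = (\<chi> i j. cnj (A $ j $ i))"

definition braket :: "complex^'n \<Rightarrow> complex^'n \<Rightarrow> complex" where
  "braket x y = (\<Sum>i\<in>UNIV. cnj (x $ i) * y $ i)"

definition ketbra :: "complex^'n \<Rightarrow> complex^'n \<Rightarrow> complex^'n^'n" where
  "ketbra x y = (\<chi> i j. x $ i * cnj (y $ j))"

definition density_matrix :: "complex^'n^'n \<Rightarrow> bool" where
  "density_matrix \<rho> \<longleftrightarrow> adj \<rho> = \<rho> \<and> (\<forall>x. 0 \<le> Re (braket x (\<rho> *v x))) \<and> trace \<rho> = 1"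

definition kraus_apply :: "('k::finite \<Rightarrow> complex^'n^'n) \<Rightarrow> complex^'n^'n \<Rightarrow> complex^'n^'n" where
  "kraus_apply K \<rho> = (\<Sum>k\<in>UNIV. K k ** \<rho> ** adj (K k))"

end

theory Submission
  imports Defs
begin

text \<open>Everything is expanded in the output eigenbasis \<open>w\<^sub>k(\<theta>)\<close>. Put
  \<open>q\<^sub>k = \<surd>p\<^sub>k\<close>, \<open>a\<^sub>j\<^sub>k = \<langle>w\<^sub>j|\<Upsilon>\<^sub>k'\<psi>\<^sub>0\<rangle>\<close> and \<open>c\<^sub>j\<^sub>k = \<langle>w\<^sub>j'|w\<^sub>k\<rangle>\<close>. Differentiating
  \<open>\<langle>w\<^sub>j|\<Upsilon>\<^sub>k\<psi>\<^sub>0\<rangle> = \<delta>\<^sub>j\<^sub>k q\<^sub>k\<close> gives \<open>a\<^sub>j\<^sub>k = \<delta>\<^sub>j\<^sub>k q\<^sub>k' - q\<^sub>k c\<^sub>j\<^sub>k\<close>, where \<open>c\<close> is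
  anti-Hermitian (the basis stays orthonormal) and \<open>q\<^sub>k'\<close> is real and vanishes where \<open>p\<^sub>k\<close> does
  (a minimum of \<open>\<surd>p\<^sub>k \<ge> 0\<close>). Differentiating the entries of \<open>\<rho>\<^sub>o\<^sub>u\<^sub>t\<close> and comparing with the SLD
  equation gives \<open>(p\<^sub>j + p\<^sub>l)/2 \<cdot> L\<^sub>j\<^sub>l = q\<^sub>l a\<^sub>j\<^sub>l + q\<^sub>j a\<^sub>l\<^sub>j\<^sup>*\<close>. Now \<open>C = 4 \<Sum> |a\<^sub>j\<^sub>l|\<^sup>2\<close> and
  \<open>H = \<Sum> p\<^sub>l |L\<^sub>j\<^sub>l|\<^sup>2\<close>, and grouping the pairs \<open>(j,l)\<close>, \<open>(l,j)\<close> yields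
  \<open>C - H = \<Sum> 8 p\<^sub>j p\<^sub>l |c\<^sub>j\<^sub>l|\<^sup>2 / (p\<^sub>j + p\<^sub>l)\<close>, a sum of non-negative terms that vanishes
  exactly when \<open>c\<^sub>j\<^sub>l = 0\<close> whenever \<open>p\<^sub>j, p\<^sub>l > 0\<close>.\<close>

section \<open>Bra-ket calculus\<close>

lemma braket_conj_sym: "braket y x = cnj (braket x y)"
  by (simp add: braket_def mult.commute)

lemma braket_zero_left [simp]: "braket 0 y = 0"
  by (simp add: braket_def)

lemma braket_zero_right [simp]: "braket x 0 = 0"
  by (simp add: braket_def)

lemma braket_add_right: "braket x (y + z) = braket x y + braket x z"
  by (simp add: braket_def algebra_simps sum.distrib)

lemma braket_scale_right: "braket x (c *s y) = c * braket x y"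
  by (simp add: braket_def sum_distrib_left algebra_simps)

lemma braket_scaleR_right: "braket x (r *\<^sub>R y) = of_real r * braket x y"
  by (simp add: braket_def sum_distrib_left) (simp add: scaleR_conv_of_real algebra_simps)

lemma braket_sum_right: "braket x (sum f S) = (\<Sum>k\<in>S. braket x (f k))"
  unfolding braket_def by (simp add: sum_distrib_left) (rule sum.swap)

lemma braket_adj: "braket x (A *v y) = braket (adj A *v x) y"
  unfolding braket_def adj_def matrix_vector_mult_def
  by (simp add: sum_distrib_left sum_distrib_right mult.assoc mult.left_commute) (rule sum.swap)

lemma cnj_mult_self: "cnj z * z = of_real ((cmod z)\<^sup>2)"
  by (metis complex_norm_square mult.commute)

lemma braket_self: "braket x x = of_real (\<Sum>i\<in>UNIV. (cmod (x $ i))\<^sup>2)"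
  unfolding braket_def of_real_sum cnj_mult_self ..

lemma braket_self_eq_0_iff: "braket x x = 0 \<longleftrightarrow> x = 0"
  unfolding braket_self of_real_eq_0_iff by (simp add: sum_nonneg_eq_0_iff vec_eq_iff)

lemma Re_braket_self_nonneg: "0 \<le> Re (braket x x)"
  unfolding braket_self by (simp add: sum_nonneg)

lemma matrix_vector_mult_sum_left: "(\<Sum>k\<in>S. f k) *v x = (\<Sum>k\<in>S. f k *v x)"
  by (simp add: vec_eq_iff matrix_vector_mult_def sum_distrib_right) (intro allI sum.swap)

lemma matrix_matrix_mult_sum_left: "(\<Sum>k\<in>S. f k) ** M = (\<Sum>k\<in>S. f k ** M)"
  by (simp add: vec_eq_iff matrix_matrix_mult_def sum_distrib_right) (intro allI sum.swap)

lemma scaleR_matrix_vector_mult: "(r *\<^sub>R A) *v x = r *\<^sub>R (A *v (x::complex^'n))"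
  by (simp add: vec_eq_iff matrix_vector_mult_def scaleR_sum_right)

lemma matrix_vector_mult_scaleR_complex: "(A::complex^'n^'m) *v (r *\<^sub>R x) = r *\<^sub>R (A *v x)"
  by (simp add: vec_eq_iff matrix_vector_mult_def scaleR_sum_right)

lemma scaleR_matrix_matrix_mult: "(r *\<^sub>R A) ** M = r *\<^sub>R (A ** (M::complex^'n^'n))"
  by (simp add: vec_eq_iff matrix_matrix_mult_def scaleR_sum_right)

lemma ketbra_conj_mult: "A ** ketbra x y ** adj B = ketbra (A *v x) (B *v y)"
  unfolding ketbra_def adj_def matrix_matrix_mult_def matrix_vector_mult_def
  by (simp add: vec_eq_iff sum_distrib_left sum_distrib_right mult.assoc mult.left_commute mult.commute)

lemma ketbra_mult_vec: "ketbra x y *v z = braket y z *s x"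
  by (simp add: ketbra_def braket_def matrix_vector_mult_def vec_eq_iff sum_distrib_left algebra_simps)

lemma trace_ketbra: "trace (ketbra x y) = braket y x"
  by (simp add: trace_def ketbra_def braket_def mult.commute)

lemma trace_ketbra_mult: "trace (ketbra x y ** M) = braket y (M *v x)"
proof -
  have "ketbra x y ** M = ketbra x (adj M *v y)"
    by (simp add: ketbra_def adj_def matrix_matrix_mult_def matrix_vector_mult_def vec_eq_iff
        sum_distrib_left algebra_simps)
  then show ?thesis
    by (simp add: trace_ketbra braket_adj adj_def)
qed

lemma trace_conj_ketbra: "trace (A ** ketbra x x ** adj B) = braket (B *v x) (A *v x)"
  by (simp add: ketbra_conj_mult trace_ketbra)

lemma trace_sum: "trace (sum f S) = (\<Sum>k\<in>S. trace (f k))"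
  unfolding trace_def by simp (rule sum.swap)

lemma trace_scaleR: "trace (r *\<^sub>R A) = of_real r * trace (A::complex^'n^'n)"
  unfolding trace_def by (simp add: sum_distrib_left) (simp add: scaleR_conv_of_real)

lemma kraus_apply_ketbra: "kraus_apply K (ketbra x x) = (\<Sum>k\<in>UNIV. ketbra (K k *v x) (K k *v x))"
  by (simp add: kraus_apply_def ketbra_conj_mult)

lemma orthonormal_expansion:
  fixes w :: "'n \<Rightarrow> complex^'n"
  assumes "\<And>j k. braket (w j) (w k) = (if j = k then 1 else 0)"
  shows "x = (\<Sum>j\<in>UNIV. braket (w j) x *s w j)"
proof -
  define W :: "complex^'n^'n" where "W = (\<chi> i j. w j $ i)"
  have "adj W ** W = mat 1"
    using assms by (simp add: W_def adj_def matrix_matrix_mult_def mat_def vec_eq_iff braket_def)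
  then have "W ** adj W = mat 1"
    by (rule matrix_left_right_inverse[THEN iffD1])
  then have "x = W *v (adj W *v x)"
    by (simp add: matrix_vector_mul_assoc)
  also have "\<dots> = (\<Sum>j\<in>UNIV. braket (w j) x *s w j)"
    by (simp add: W_def adj_def matrix_vector_mult_def vec_eq_iff braket_def mult.commute)
  finally show ?thesis .
qed

lemma parseval:
  fixes w :: "'n \<Rightarrow> complex^'n"
  assumes "\<And>j k. braket (w j) (w k) = (if j = k then 1 else 0)"
  shows "braket x x = of_real (\<Sum>j\<in>UNIV. (cmod (braket (w j) x))\<^sup>2)"
proof -
  have "braket x x = braket x (\<Sum>j\<in>UNIV. braket (w j) x *s w j)"
    using orthonormal_expansion[OF assms, of x] by simp
  also have "\<dots> = (\<Sum>j\<in>UNIV. cnj (braket (w j) x) * braket (w j) x)"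
    by (simp add: braket_sum_right braket_scale_right mult.commute braket_conj_sym[of x])
  finally show ?thesis
    by (simp add: cnj_mult_self)
qed

section \<open>Derivatives of inner products\<close>

lemma has_vector_derivative_braket:
  assumes "(f has_vector_derivative f') (at t)" and "(g has_vector_derivative g') (at t)"
  shows "((\<lambda>t. braket (f t) (g t)) has_vector_derivative braket f' (g t) + braket (f t) g') (at t)"
proof -
  have component: "((\<lambda>t. h t $ i) has_vector_derivative h' $ i) (at t)"
    if "(h has_vector_derivative h') (at t)" for h :: "real \<Rightarrow> complex^'n" and h' i
    using bounded_linear.has_vector_derivative[OF bounded_linear_vec_nth that] .
  have "((\<lambda>t. \<Sum>i\<in>UNIV. cnj (f t $ i) * g t $ i) has_vector_derivative
        (\<Sum>i\<in>UNIV. cnj (f t $ i) * g' $ i + cnj (f' $ i) * g t $ i)) (at t)"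
    by (intro has_vector_derivative_sum has_vector_derivative_mult has_vector_derivative_cnj
        component assms)
  then show ?thesis
    by (simp add: braket_def sum.distrib add.commute)
qed

lemma has_vector_derivative_braket_const_left:
  "(g has_vector_derivative g') (at t) \<Longrightarrow>
     ((\<lambda>t. braket x (g t)) has_vector_derivative braket x g') (at t)"
  using has_vector_derivative_braket[OF has_vector_derivative_const] by simp

lemma has_vector_derivative_braket_const_right:
  "(f has_vector_derivative f') (at t) \<Longrightarrow>
     ((\<lambda>t. braket (f t) y) has_vector_derivative braket f' y) (at t)"
  using has_vector_derivative_braket[OF _ has_vector_derivative_const] by simp

lemma has_vector_derivative_const_imp_zero:
  "((\<lambda>t. c) has_vector_derivative D) (at t) \<Longrightarrow> D = 0"
  using vector_derivative_unique_at[OF has_vector_derivative_const] by blast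

lemma has_vector_derivative_matrix_vector_mult:
  assumes "(A has_vector_derivative A') (at t)"
  shows "((\<lambda>t. A t *v x) has_vector_derivative A' *v (x::complex^'n)) (at t)"
proof -
  have "linear (\<lambda>A::complex^'n^'m. A *v x)"
    by (rule linearI) (simp_all add: matrix_vector_mult_add_rdistrib scaleR_matrix_vector_mult)
  then show ?thesis
    by (rule bounded_linear.has_vector_derivative[OF linear_conv_bounded_linear[THEN iffD1] assms])
qed

lemma orthonormal_family_derivative_antihermitian:
  assumes "\<And>t. braket (w j t) (w k t) = (if j = k then 1 else 0)"
    and "(w j has_vector_derivative w'j) (at t)" and "(w k has_vector_derivative w'k) (at t)"
  shows "braket w'j (w k t) = - cnj (braket w'k (w j t))"
proof -
  have "((\<lambda>t. braket (w j t) (w k t)) has_vector_derivative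
          braket w'j (w k t) + braket (w j t) w'k) (at t)"
    using has_vector_derivative_braket[OF assms(2,3)] .
  then have "braket w'j (w k t) + braket (w j t) w'k = 0"
    unfolding assms(1) by (rule has_vector_derivative_const_imp_zero)
  then show ?thesis
    by (simp add: braket_conj_sym[of "w j t"] add_eq_0_iff)
qed

lemma has_vector_derivative_of_real_Im:
  assumes "((\<lambda>t. complex_of_real (f t)) has_vector_derivative D) (at t)"
  shows "Im D = 0"
  using bounded_linear.has_vector_derivative[OF bounded_linear_Im assms]
  by (simp add: has_vector_derivative_const_imp_zero)

lemma has_vector_derivative_of_real_at_zero_min:
  assumes "((\<lambda>t. complex_of_real (f t)) has_vector_derivative D) (at t)"
    and "\<And>s. 0 \<le> f s" and "f t = 0"
  shows "D = 0"
proof -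
  have "(f has_field_derivative Re D) (at t)"
    using bounded_linear.has_vector_derivative[OF bounded_linear_Re assms(1)]
    by (simp add: has_real_derivative_iff_has_vector_derivative)
  then have "Re D = 0"
    by (rule DERIV_local_min[where d=1]) (use assms(2,3) in auto)
  with has_vector_derivative_of_real_Im[OF assms(1)] show ?thesis
    by (simp add: complex_eq_iff)
qed

section \<open>The defect between the two Fisher informations\<close>

lemma sld_defect_offdiag:
  fixes qj ql :: real and c a1 a2 L1 L2 :: complex
  assumes "0 \<le> qj" "0 \<le> ql" "a1 = - of_real ql * c" "a2 = of_real qj * cnj c"
    and "of_real ((qj\<^sup>2 + ql\<^sup>2) / 2) * L1 = a1 * of_real ql + of_real qj * cnj a2"
    and "cmod L2 = cmod L1"
  shows "4 * (cmod a1)\<^sup>2 + 4 * (cmod a2)\<^sup>2 - ql\<^sup>2 * (cmod L1)\<^sup>2 - qj\<^sup>2 * (cmod L2)\<^sup>2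
         = 16 * qj\<^sup>2 * ql\<^sup>2 * (cmod c)\<^sup>2 / (qj\<^sup>2 + ql\<^sup>2)"
proof -
  have "of_real ((qj\<^sup>2 + ql\<^sup>2) / 2) * L1 = of_real (qj\<^sup>2 - ql\<^sup>2) * c"
    using assms(3-5) by (simp add: algebra_simps power2_eq_square)
  then have "((qj\<^sup>2 + ql\<^sup>2) / 2)\<^sup>2 * (cmod L1)\<^sup>2 = (qj\<^sup>2 - ql\<^sup>2)\<^sup>2 * (cmod c)\<^sup>2"
    by (metis norm_mult norm_of_real power_mult_distrib power2_abs)
  moreover have "cmod a1 = ql * cmod c" "cmod a2 = qj * cmod c"
    using assms(1-4) by (simp_all add: norm_mult)
  ultimately show ?thesis
    using assms(6) by (cases "qj\<^sup>2 + ql\<^sup>2 = 0") (auto simp: field_simps power2_eq_square)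
qed

lemma sld_defect_diag:
  fixes q :: real and d c a L :: complex
  assumes "0 \<le> q" "Im d = 0" "q = 0 \<Longrightarrow> d = 0" "c = - cnj c" "a = d - of_real q * c"
    and "of_real ((q\<^sup>2 + q\<^sup>2) / 2) * L = a * of_real q + of_real q * cnj a"
  shows "4 * (cmod a)\<^sup>2 + 4 * (cmod a)\<^sup>2 - q\<^sup>2 * (cmod L)\<^sup>2 - q\<^sup>2 * (cmod L)\<^sup>2
         = 16 * q\<^sup>2 * q\<^sup>2 * (cmod c)\<^sup>2 / (q\<^sup>2 + q\<^sup>2)"
proof (cases "q = 0")
  case True
  then show ?thesis using assms(3,5) by simp
next
  case False
  have "Re c = 0"
    using arg_cong[OF assms(4), of Re] by simp
  then have a: "a = Complex (Re d) (- q * Im c)"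
    using assms(2,5) by (simp add: complex_eq_iff)
  have "of_real (q\<^sup>2) * L = of_real (2 * q * Re d)"
    using assms(6) a by (simp add: complex_eq_iff algebra_simps power2_eq_square)
  then have "L = of_real (2 * Re d / q)"
    using False by (simp add: field_simps power2_eq_square)
  then have "(cmod L)\<^sup>2 = (2 * Re d / q)\<^sup>2"
    by (simp only: norm_of_real power2_abs)
  moreover have "(cmod a)\<^sup>2 = (Re d)\<^sup>2 + q\<^sup>2 * (Im c)\<^sup>2" "(cmod c)\<^sup>2 = (Im c)\<^sup>2"
    using a \<open>Re c = 0\<close> by (simp_all add: cmod_power2 power_mult_distrib)
  ultimately show ?thesis
    using False by (simp add: field_simps power2_eq_square)
qed

lemma double_sum_eq_iff_symmetrized_diff_eq_0:
  fixes A B :: "'a \<Rightarrow> 'a \<Rightarrow> real"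
  assumes "finite S" and "\<And>j l. 0 \<le> A j l + A l j - B j l - B l j"
  shows "(\<Sum>l\<in>S. \<Sum>j\<in>S. A j l) = (\<Sum>l\<in>S. \<Sum>j\<in>S. B j l)
         \<longleftrightarrow> (\<forall>j\<in>S. \<forall>l\<in>S. A j l + A l j - B j l - B l j = 0)"
proof -
  have swap: "(\<Sum>l\<in>S. \<Sum>j\<in>S. X l j) = (\<Sum>l\<in>S. \<Sum>j\<in>S. X j l)" for X :: "'a \<Rightarrow> 'a \<Rightarrow> real"
    by (rule sum.swap)
  have "(\<Sum>l\<in>S. \<Sum>j\<in>S. A j l + A l j - B j l - B l j)
        = 2 * ((\<Sum>l\<in>S. \<Sum>j\<in>S. A j l) - (\<Sum>l\<in>S. \<Sum>j\<in>S. B j l))"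
    using swap[of A] swap[of B] by (simp add: sum.distrib sum_subtractf)
  moreover have "(\<Sum>l\<in>S. \<Sum>j\<in>S. A j l + A l j - B j l - B l j) = 0
        \<longleftrightarrow> (\<forall>l\<in>S. \<forall>j\<in>S. A j l + A l j - B j l - B l j = 0)"
    using assms by (simp add: sum_nonneg_eq_0_iff sum_nonneg)
  ultimately show ?thesis
    by auto
qed

lemma sld_bound_coefficients_eq_iff:
  fixes q :: "'n::finite \<Rightarrow> real" and d :: "'n \<Rightarrow> complex" and a c Lm :: "'n \<Rightarrow> 'n \<Rightarrow> complex"
  assumes q_nonneg: "\<And>j. 0 \<le> q j"
    and d_real: "\<And>j. Im (d j) = 0" and d_zero: "\<And>j. q j = 0 \<Longrightarrow> d j = 0"
    and c_antihermitian: "\<And>j l. c l j = - cnj (c j l)"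
    and a_eq: "\<And>j l. a j l = (if j = l then d j else 0) - of_real (q l) * c j l"
    and Lm_eq: "\<And>j l. of_real (((q j)\<^sup>2 + (q l)\<^sup>2) / 2) * Lm j l
                         = a j l * of_real (q l) + of_real (q j) * cnj (a l j)"
    and Lm_hermitian: "\<And>j l. Lm l j = cnj (Lm j l)"
  shows "(\<Sum>l\<in>UNIV. \<Sum>j\<in>UNIV. 4 * (cmod (a j l))\<^sup>2)
           = (\<Sum>l\<in>UNIV. (q l)\<^sup>2 * (\<Sum>j\<in>UNIV. (cmod (Lm j l))\<^sup>2))
         \<longleftrightarrow> (\<forall>j l. 0 < q j \<and> 0 < q l \<longrightarrow> c j l = 0)"
proof -
  define A where "A j l = 4 * (cmod (a j l))\<^sup>2" for j l
  define B where "B j l = (q l)\<^sup>2 * (cmod (Lm j l))\<^sup>2" for j l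
  have defect: "A j l + A l j - B j l - B l j
                = 16 * (q j)\<^sup>2 * (q l)\<^sup>2 * (cmod (c j l))\<^sup>2 / ((q j)\<^sup>2 + (q l)\<^sup>2)" for j l
  proof (cases "j = l")
    case True
    then show ?thesis
      unfolding A_def B_def
      using sld_defect_diag[OF q_nonneg d_real d_zero c_antihermitian _ Lm_eq[of j j]] a_eq[of j j]
      by simp
  next
    case False
    then show ?thesis
      unfolding A_def B_def
      by (intro sld_defect_offdiag[OF q_nonneg q_nonneg _ _ Lm_eq[of j l]])
        (simp_all add: a_eq c_antihermitian[of j l] Lm_hermitian[of j l])
  qed
  have defect_zero_iff: "A j l + A l j - B j l - B l j = 0 \<longleftrightarrow> \<not> (0 < q j \<and> 0 < q l \<and> c j l \<noteq> 0)"
    for j l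
    using q_nonneg[of j] q_nonneg[of l] by (auto simp: defect add_nonneg_eq_0_iff)
  have "(\<Sum>l\<in>UNIV. (q l)\<^sup>2 * (\<Sum>j\<in>UNIV. (cmod (Lm j l))\<^sup>2)) = (\<Sum>l\<in>UNIV. \<Sum>j\<in>UNIV. B j l)"
    by (simp add: B_def sum_distrib_left)
  moreover have "\<And>j l. 0 \<le> A j l + A l j - B j l - B l j"
    by (simp add: defect)
  ultimately show ?thesis
    using double_sum_eq_iff_symmetrized_diff_eq_0[of UNIV A B] defect_zero_iff
    unfolding A_def by auto
qed

section \<open>Canonical Kraus operators on a pure input\<close>

locale canonical_kraus_pure_input =
  fixes \<Upsilon> :: "'n::finite \<Rightarrow> real \<Rightarrow> complex^'n^'n"
    and \<psi>0 :: "complex^'n"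
    and p :: "'n \<Rightarrow> real \<Rightarrow> real"
    and w :: "'n \<Rightarrow> real \<Rightarrow> complex^'n"
  assumes \<Upsilon>_diff: "\<And>k t. \<Upsilon> k differentiable (at t)"
    and canonical: "\<And>t j k. trace (\<Upsilon> k t ** ketbra \<psi>0 \<psi>0 ** adj (\<Upsilon> j t))
                             = (if j = k then complex_of_real (p k t) else 0)"
    and w_orthonormal: "\<And>t j k. braket (w j t) (w k t) = (if j = k then 1 else 0)"
    and w_diff: "\<And>k t. w k differentiable (at t)"
    and w_def: "\<And>k t. p k t > 0 \<Longrightarrow>
                   w k t = (complex_of_real (1 / sqrt (p k t))) *s (\<Upsilon> k t *v \<psi>0)"
    and rho_out: "\<And>t. kraus_apply (\<lambda>k. \<Upsilon> k t) (ketbra \<psi>0 \<psi>0)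
                     = (\<Sum>k\<in>UNIV. p k t *\<^sub>R ketbra (w k t) (w k t))"
begin

abbreviation \<phi> :: "'n \<Rightarrow> real \<Rightarrow> complex^'n" where
  "\<phi> k t \<equiv> \<Upsilon> k t *v \<psi>0"

abbreviation \<rho> :: "real \<Rightarrow> complex^'n^'n" where
  "\<rho> t \<equiv> kraus_apply (\<lambda>k. \<Upsilon> k t) (ketbra \<psi>0 \<psi>0)"

lemma braket_\<phi>: "braket (\<phi> j t) (\<phi> k t) = (if j = k then of_real (p k t) else 0)"
  using canonical[where t=t and j=j and k=k] by (simp add: trace_conj_ketbra)

lemma p_nonneg: "0 \<le> p k t"
  using Re_braket_self_nonneg[of "\<phi> k t"] by (simp add: braket_\<phi>)

lemma \<phi>_eq_sqrt_p_w: "\<phi> k t = of_real (sqrt (p k t)) *s w k t"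
proof (cases "p k t > 0")
  case True
  then show ?thesis
    by (simp add: w_def flip: of_real_mult)
next
  case False
  then have "p k t = 0"
    using p_nonneg[of k t] by simp
  moreover from this have "braket (\<phi> k t) (\<phi> k t) = 0"
    by (simp add: braket_\<phi>)
  then have "\<phi> k t = 0"
    by (simp add: braket_self_eq_0_iff)
  ultimately show ?thesis
    by simp
qed

lemma braket_w_\<phi>: "braket (w j t) (\<phi> k t) = (if j = k then of_real (sqrt (p k t)) else 0)"
  by (simp add: \<phi>_eq_sqrt_p_w braket_scale_right w_orthonormal)

lemma \<rho>_mult_w: "\<rho> t *v w k t = p k t *\<^sub>R w k t"
  by (simp add: rho_out matrix_vector_mult_sum_left scaleR_matrix_vector_mult ketbra_mult_vec
      w_orthonormal if_distrib[of "\<lambda>z. z *s _"] if_distrib[of "\<lambda>z. _ *\<^sub>R z"] cong: if_cong)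

lemma braket_w_\<rho>: "braket (w j t) (\<rho> t *v y) = of_real (p j t) * braket (w j t) y"
  by (simp add: rho_out matrix_vector_mult_sum_left scaleR_matrix_vector_mult ketbra_mult_vec
      braket_sum_right braket_scaleR_right braket_scale_right w_orthonormal if_distrib[of "(*) _"]
      cong: if_cong)

end

locale sld_setting = canonical_kraus_pure_input \<Upsilon> \<psi>0 p w
  for \<Upsilon> :: "'n::finite \<Rightarrow> real \<Rightarrow> complex^'n^'n" and \<psi>0 p w +
  fixes L :: "complex^'n^'n" and \<theta> :: real
  assumes L_sa: "adj L = L"
    and L_sld: "(\<rho> has_vector_derivative (1/2) *\<^sub>R (\<rho> \<theta> ** L + L ** \<rho> \<theta>)) (at \<theta>)"
begin

abbreviation \<Upsilon>' :: "'n \<Rightarrow> complex^'n^'n" where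
  "\<Upsilon>' k \<equiv> vector_derivative (\<Upsilon> k) (at \<theta>)"

abbreviation w' :: "'n \<Rightarrow> complex^'n" where
  "w' k \<equiv> vector_derivative (w k) (at \<theta>)"

definition q :: "'n \<Rightarrow> real" where
  "q k = sqrt (p k \<theta>)"

definition a :: "'n \<Rightarrow> 'n \<Rightarrow> complex" where
  "a j k = braket (w j \<theta>) (\<Upsilon>' k *v \<psi>0)"

definition c :: "'n \<Rightarrow> 'n \<Rightarrow> complex" where
  "c j k = braket (w' j) (w k \<theta>)"

definition Lm :: "'n \<Rightarrow> 'n \<Rightarrow> complex" where
  "Lm j k = braket (w j \<theta>) (L *v w k \<theta>)"

lemma q_nonneg: "0 \<le> q k"
  by (simp add: q_def p_nonneg)

lemma q_squared: "(q k)\<^sup>2 = p k \<theta>"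
  by (simp add: q_def p_nonneg)

lemma has_vector_derivative_\<Upsilon>: "(\<Upsilon> k has_vector_derivative \<Upsilon>' k) (at \<theta>)"
  using \<Upsilon>_diff vector_derivative_works by blast

lemma has_vector_derivative_w: "(w k has_vector_derivative w' k) (at \<theta>)"
  using w_diff vector_derivative_works by blast

lemma has_vector_derivative_\<phi>: "((\<lambda>t. \<phi> k t) has_vector_derivative \<Upsilon>' k *v \<psi>0) (at \<theta>)"
  by (rule has_vector_derivative_matrix_vector_mult[OF has_vector_derivative_\<Upsilon>])

lemma has_vector_derivative_braket_w_\<phi>:
  "((\<lambda>t. braket (w j t) (\<phi> k t)) has_vector_derivative of_real (q k) * c j k + a j k) (at \<theta>)"
  using has_vector_derivative_braket[OF has_vector_derivative_w has_vector_derivative_\<phi>]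
  by (simp add: \<phi>_eq_sqrt_p_w braket_scale_right a_def c_def q_def)

definition d :: "'n \<Rightarrow> complex" where
  "d k = of_real (q k) * c k k + a k k"

lemma has_vector_derivative_sqrt_p:
  "((\<lambda>t. complex_of_real (sqrt (p k t))) has_vector_derivative d k) (at \<theta>)"
  using has_vector_derivative_braket_w_\<phi>[of k k] by (simp add: braket_w_\<phi> d_def)

lemma d_real: "Im (d k) = 0"
  by (rule has_vector_derivative_of_real_Im[OF has_vector_derivative_sqrt_p])

lemma d_eq_0: "q k = 0 \<Longrightarrow> d k = 0"
  by (rule has_vector_derivative_of_real_at_zero_min[OF has_vector_derivative_sqrt_p])
    (simp_all add: q_def p_nonneg)

lemma a_eq: "a j k = (if j = k then d j else 0) - of_real (q k) * c j k"
proof (cases "j = k")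
  case False
  then have "of_real (q k) * c j k + a j k = 0"
    using has_vector_derivative_braket_w_\<phi>[of j k]
    by (simp add: braket_w_\<phi> has_vector_derivative_const_imp_zero)
  with False show ?thesis
    by (simp add: add_eq_0_iff)
qed (simp add: d_def)

lemma c_antihermitian: "c k j = - cnj (c j k)"
  unfolding c_def
  by (rule orthonormal_family_derivative_antihermitian[OF w_orthonormal has_vector_derivative_w
        has_vector_derivative_w])

lemma Lm_hermitian: "Lm k j = cnj (Lm j k)"
  unfolding Lm_def by (subst braket_adj) (simp add: L_sa braket_conj_sym[of "L *v w k \<theta>"])

lemma has_vector_derivative_\<rho>_entry:
  "((\<lambda>t. braket (w j \<theta>) (\<rho> t *v w l \<theta>)) has_vector_derivative
      a j l * of_real (q l) + of_real (q j) * cnj (a l j)) (at \<theta>)"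
proof -
  have entry: "braket (w j \<theta>) (\<rho> t *v w l \<theta>)
      = (\<Sum>k\<in>UNIV. braket (\<phi> k t) (w l \<theta>) * braket (w j \<theta>) (\<phi> k t))" for t
    by (simp add: kraus_apply_ketbra matrix_vector_mult_sum_left ketbra_mult_vec braket_sum_right
        braket_scale_right)
  have "((\<lambda>t. \<Sum>k\<in>UNIV. braket (\<phi> k t) (w l \<theta>) * braket (w j \<theta>) (\<phi> k t)) has_vector_derivative
      (\<Sum>k\<in>UNIV. braket (\<phi> k \<theta>) (w l \<theta>) * a j k + braket (\<Upsilon>' k *v \<psi>0) (w l \<theta>) * braket (w j \<theta>) (\<phi> k \<theta>)))
      (at \<theta>)"
    unfolding a_def
    by (intro has_vector_derivative_sum has_vector_derivative_mult has_vector_derivative_\<phi>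
        has_vector_derivative_braket_const_left has_vector_derivative_braket_const_right)
  moreover have "braket (\<phi> k \<theta>) (w l \<theta>) = (if k = l then of_real (q l) else 0)"
    "braket (\<Upsilon>' k *v \<psi>0) (w l \<theta>) = cnj (a l k)" for k
    by (simp_all add: braket_conj_sym[of "\<phi> k \<theta>"] braket_conj_sym[of "\<Upsilon>' k *v \<psi>0"] braket_w_\<phi>
        a_def q_def)
  ultimately show ?thesis
    by (simp add: entry braket_w_\<phi> sum.distrib if_distrib[of "\<lambda>z. z * _"] if_distrib[of "(*) _"]
        q_def mult.commute cong: if_cong)
qed

lemma braket_w_sld_derivative:
  "braket (w j \<theta>) (((1/2) *\<^sub>R (\<rho> \<theta> ** L + L ** \<rho> \<theta>)) *v w l \<theta>)
     = of_real (((q j)\<^sup>2 + (q l)\<^sup>2) / 2) * Lm j l"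
  by (simp add: scaleR_matrix_vector_mult matrix_vector_mult_add_rdistrib braket_scaleR_right
      braket_add_right matrix_vector_mul_assoc[symmetric] braket_w_\<rho> \<rho>_mult_w
      matrix_vector_mult_scaleR_complex Lm_def q_squared algebra_simps)

lemma Lm_eq:
  "of_real (((q j)\<^sup>2 + (q l)\<^sup>2) / 2) * Lm j l = a j l * of_real (q l) + of_real (q j) * cnj (a l j)"
proof -
  have "((\<lambda>t. braket (w j \<theta>) (\<rho> t *v w l \<theta>)) has_vector_derivative
      braket (w j \<theta>) (((1/2) *\<^sub>R (\<rho> \<theta> ** L + L ** \<rho> \<theta>)) *v w l \<theta>)) (at \<theta>)"
    by (intro has_vector_derivative_braket_const_left has_vector_derivative_matrix_vector_mult L_sld)
  from vector_derivative_unique_at[OF this has_vector_derivative_\<rho>_entry] show ?thesis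
    by (simp add: braket_w_sld_derivative)
qed

lemma Sarovar_Milburn_term_eq:
  "trace (\<Upsilon>' k ** ketbra \<psi>0 \<psi>0 ** adj (\<Upsilon>' k)) = of_real (\<Sum>j\<in>UNIV. (cmod (a j k))\<^sup>2)"
  by (simp add: trace_conj_ketbra parseval[where w="\<lambda>j. w j \<theta>", OF w_orthonormal] a_def)

lemma sld_information_eq:
  "trace (\<rho> \<theta> ** L ** L) = of_real (\<Sum>l\<in>UNIV. (q l)\<^sup>2 * (\<Sum>j\<in>UNIV. (cmod (Lm j l))\<^sup>2))"
proof -
  have "trace (ketbra (w l \<theta>) (w l \<theta>) ** L ** L) = braket (L *v w l \<theta>) (L *v w l \<theta>)" for l
    by (simp add: trace_ketbra_mult flip: matrix_mul_assoc matrix_vector_mul_assoc)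
      (subst braket_adj, simp add: L_sa)
  then show ?thesis
    by (simp add: rho_out matrix_matrix_mult_sum_left scaleR_matrix_matrix_mult trace_sum trace_scaleR
        parseval[where w="\<lambda>j. w j \<theta>", OF w_orthonormal] Lm_def q_squared)
qed

theorem sld_information_eq_Sarovar_Milburn_iff:
  "trace (\<rho> \<theta> ** L ** L) = 4 * (\<Sum>k\<in>UNIV. trace (\<Upsilon>' k ** ketbra \<psi>0 \<psi>0 ** adj (\<Upsilon>' k)))
   \<longleftrightarrow> (\<forall>j k. p j \<theta> > 0 \<and> p k \<theta> > 0 \<longrightarrow> braket (w' j) (w k \<theta>) = 0)"
proof -
  have bound: "4 * (\<Sum>k\<in>UNIV. trace (\<Upsilon>' k ** ketbra \<psi>0 \<psi>0 ** adj (\<Upsilon>' k)))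
      = of_real (\<Sum>l\<in>UNIV. \<Sum>j\<in>UNIV. 4 * (cmod (a j l))\<^sup>2)"
    by (simp add: Sarovar_Milburn_term_eq sum_distrib_left)
  have "trace (\<rho> \<theta> ** L ** L) = 4 * (\<Sum>k\<in>UNIV. trace (\<Upsilon>' k ** ketbra \<psi>0 \<psi>0 ** adj (\<Upsilon>' k)))
      \<longleftrightarrow> (\<Sum>l\<in>UNIV. \<Sum>j\<in>UNIV. 4 * (cmod (a j l))\<^sup>2)
            = (\<Sum>l\<in>UNIV. (q l)\<^sup>2 * (\<Sum>j\<in>UNIV. (cmod (Lm j l))\<^sup>2))"
    unfolding sld_information_eq bound of_real_eq_iff by (rule eq_commute)
  also have "\<dots> \<longleftrightarrow> (\<forall>j l. 0 < q j \<and> 0 < q l \<longrightarrow> c j l = 0)"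
    by (rule sld_bound_coefficients_eq_iff[OF q_nonneg d_real d_eq_0 c_antihermitian a_eq Lm_eq
          Lm_hermitian])
  finally show ?thesis
    by (simp add: q_def c_def)
qed

end

theorem lemma2:
  fixes E :: "'m::finite \<Rightarrow> real \<Rightarrow> complex^'n^'n"
    and \<Upsilon> :: "'n \<Rightarrow> real \<Rightarrow> complex^'n^'n"
    and \<psi>0 :: "complex^'n"
    and p :: "'n \<Rightarrow> real \<Rightarrow> real"
    and w :: "'n \<Rightarrow> real \<Rightarrow> complex^'n"
    and L :: "complex^'n^'n"
    and \<theta> :: real
  assumes E_diff: "\<And>k t. E k differentiable (at t)"
    and E_kraus: "\<And>t. (\<Sum>k\<in>UNIV. adj (E k t) ** E k t) = mat 1"
    and \<Upsilon>_diff: "\<And>k t. \<Upsilon> k differentiable (at t)"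
    and \<Upsilon>_kraus: "\<And>t. (\<Sum>k\<in>UNIV. adj (\<Upsilon> k t) ** \<Upsilon> k t) = mat 1"
    and same_channel: "\<And>t \<rho>. density_matrix \<rho> \<Longrightarrow>
                         kraus_apply (\<lambda>k. E k t) \<rho> = kraus_apply (\<lambda>k. \<Upsilon> k t) \<rho>"
    and \<psi>0_unit: "braket \<psi>0 \<psi>0 = 1"
    and canonical: "\<And>t j k. trace (\<Upsilon> k t ** ketbra \<psi>0 \<psi>0 ** adj (\<Upsilon> j t))
                             = (if j = k then complex_of_real (p k t) else 0)"
    and w_orthonormal: "\<And>t j k. braket (w j t) (w k t) = (if j = k then 1 else 0)"
    and w_diff: "\<And>k t. w k differentiable (at t)"
    and w_def: "\<And>k t. p k t > 0 \<Longrightarrow>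
                   w k t = (complex_of_real (1 / sqrt (p k t))) *s (\<Upsilon> k t *v \<psi>0)"
    and rho_out: "\<And>t. kraus_apply (\<lambda>k. \<Upsilon> k t) (ketbra \<psi>0 \<psi>0)
                     = (\<Sum>k\<in>UNIV. p k t *\<^sub>R ketbra (w k t) (w k t))"
    and L_sa: "adj L = L"
    and L_sld: "((\<lambda>t. kraus_apply (\<lambda>k. \<Upsilon> k t) (ketbra \<psi>0 \<psi>0)) has_vector_derivative
                  (1/2) *\<^sub>R (kraus_apply (\<lambda>k. \<Upsilon> k \<theta>) (ketbra \<psi>0 \<psi>0) ** L
                              + L ** kraus_apply (\<lambda>k. \<Upsilon> k \<theta>) (ketbra \<psi>0 \<psi>0))) (at \<theta>)"
  shows "trace (kraus_apply (\<lambda>k. \<Upsilon> k \<theta>) (ketbra \<psi>0 \<psi>0) ** L ** L)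
           = 4 * (\<Sum>k\<in>UNIV. trace (vector_derivative (\<Upsilon> k) (at \<theta>) ** ketbra \<psi>0 \<psi>0
                                     ** adj (vector_derivative (\<Upsilon> k) (at \<theta>))))
         \<longleftrightarrow> (\<forall>j k. p j \<theta> > 0 \<and> p k \<theta> > 0 \<longrightarrow>
                 braket (vector_derivative (w j) (at \<theta>)) (w k \<theta>) = 0)"
proof -
  interpret sld_setting \<Upsilon> \<psi>0 p w L \<theta>
    by unfold_locales (fact \<Upsilon>_diff canonical w_orthonormal w_diff w_def rho_out L_sa L_sld)+
  show ?thesis
    by (rule sld_information_eq_Sarovar_Milburn_iff)
qed

end
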